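(* Let $(\mathcal{A}_\Lambda,\partial_\Lambda)$ and $(\mathcal{A}'_\Lambda,\partial'_\Lambda)$ be filtered Chekanov–Eliashberg DGAs, the former generated by $q_1,\dots,q_n$ with height filtration $h$ and the latter generated by $q_1',\dots,q_n'$ with height filtration $h'$. Let $\sigma:(\mathcal{A}_\Lambda,\partial_\Lambda)\to(\mathcal{A}'_\Lambda,\partial'_\Lambda)$ be the DGA isomorphism defined by $\sigma(q_i)=q_i'$, let $\epsilon$ be an augmentation of $\mathcal{A}_\Lambda$ and use the augmentation $\epsilon\circ\sigma^{-1}$ on $\mathcal{A}'_\Lambda$. If \[ \delta\ \ge\ \max_{1\le i\le n}|h'(\sigma(q_i))-h(q_i)|, \] then $\sigma$ induces a $2\delta$-interleaving of the persistent linearized chain complexes $(A_\Lambda^\bullet,\partial_1^\epsilon)$ and $((A'_\Lambda)^\bullet,(\partial')_1^{\epsilon\circ\sigma^{-1}})$.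
   Context: A filtered Chekanov–Eliashberg DGA is a Chekanov–Eliashberg DGA (free noncommutative graded algebra over $\mathbb{Z}_2$ on generators $q_i$ with differential $\partial$) together with heights $h(q_i)>0$, extended by $h(\text{word})=$ sum of letter heights and $h(\text{sum})=$ max, such that the differential strictly decreases height. An augmentation is an algebra map $\epsilon$ to $\mathbb{Z}_2$ vanishing in nonzero degrees with $\epsilon\circ\partial=0$; $\partial_1^\epsilon$ is the linearized differential (length-one part of $\phi^\epsilon\partial(\phi^\epsilon)^{-1}$, $\phi^\epsilon(q_i)=q_i+\epsilon(q_i)$) on the vector space $A_\Lambda$ spanned by the generators, and $A^t_\Lambda$ is the subcomplex spanned by generators of height $\le t$, with transfer maps the inclusions. Two persistence modules (here of chain complexes) $U^\bullet,V^\bullet$ with transfer maps $u_s^t,v_s^t$ are $2\delta$-interleaved if there are families of maps $\varphi^t:U^t\to V^{t+\delta}$, $\psi^t:V^t\to U^{t+\delta}$ commuting with transfer maps and satisfying $\psi^{t+\delta}\circ\varphi^t=u_t^{t+2\delta}$ and $\varphi^{t+\delta}\circ\psi^t=v_t^{t+2\delta}$. *)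

theory Defs
  imports Complex_Main "HOL-Library.Z2" "HOL-Library.Function_Algebras"
begin

text \<open>A word in the generators is a list of generator indices; an element of the
  algebra is a Z2-valued coefficient function on words (with finite support).\<close>

type_synonym word = "nat list"
type_synonym fa = "word \<Rightarrow> bit"

definition mon :: "word \<Rightarrow> fa" where
  "mon w = (\<lambda>u. if u = w then 1 else 0)"

definition supp :: "fa \<Rightarrow> word set" where
  "supp a = {w. a w \<noteq> 0}"

definition is_elem :: "nat \<Rightarrow> fa \<Rightarrow> bool" where
  "is_elem n a \<longleftrightarrow> finite (supp a) \<and> (\<forall>w\<in>supp a. set w \<subseteq> {..<n})"

text \<open>Product: concatenation of words, extended bilinearly.\<close>
definition fmul :: "fa \<Rightarrow> fa \<Rightarrow> fa" where
  "fmul a b = (\<lambda>w. \<Sum>k\<le>length w. a (take k w) * b (drop k w))"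

definition lin_ext :: "(word \<Rightarrow> fa) \<Rightarrow> fa \<Rightarrow> fa" where
  "lin_ext f a = (\<lambda>u. \<Sum>w\<in>supp a. a w * f w u)"

definition alg_word :: "(nat \<Rightarrow> fa) \<Rightarrow> word \<Rightarrow> fa" where
  "alg_word f w = foldr (\<lambda>i acc. fmul (f i) acc) w (mon [])"

definition alg :: "(nat \<Rightarrow> fa) \<Rightarrow> fa \<Rightarrow> fa" where
  "alg f = lin_ext (alg_word f)"

text \<open>Derivation (Leibniz rule; no signs over Z2) determined by D on generators.\<close>
definition deriv_word :: "(nat \<Rightarrow> fa) \<Rightarrow> word \<Rightarrow> fa" where
  "deriv_word D w = (\<Sum>m<length w. fmul (fmul (mon (take m w)) (D (w ! m))) (mon (drop (Suc m) w)))"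

definition deriv :: "(nat \<Rightarrow> fa) \<Rightarrow> fa \<Rightarrow> fa" where
  "deriv D = lin_ext (deriv_word D)"

definition aug_eval :: "(nat \<Rightarrow> bit) \<Rightarrow> fa \<Rightarrow> bit" where
  "aug_eval \<epsilon> a = (\<Sum>w\<in>supp a. a w * prod_list (map \<epsilon> w))"

text \<open>deg i is the grading of q_i, D i = \<partial>(q_i).\<close>
definition CE_DGA :: "nat \<Rightarrow> (nat \<Rightarrow> int) \<Rightarrow> (nat \<Rightarrow> fa) \<Rightarrow> bool" where
  "CE_DGA n deg D \<longleftrightarrow>
     (\<forall>i<n. is_elem n (D i)) \<and>
     (\<forall>i<n. \<forall>w\<in>supp (D i). sum_list (map deg w) = deg i - 1) \<and>
     (\<forall>a. is_elem n a \<longrightarrow> deriv D (deriv D a) = 0)"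

definition word_height :: "(nat \<Rightarrow> real) \<Rightarrow> word \<Rightarrow> real" where
  "word_height h w = sum_list (map h w)"

definition filtered_CE_DGA :: "nat \<Rightarrow> (nat \<Rightarrow> int) \<Rightarrow> (nat \<Rightarrow> fa) \<Rightarrow> (nat \<Rightarrow> real) \<Rightarrow> bool" where
  "filtered_CE_DGA n deg D h \<longleftrightarrow> CE_DGA n deg D \<and> (\<forall>i<n. h i > 0) \<and>
     (\<forall>i<n. \<forall>w\<in>supp (D i). word_height h w < h i)"

definition augmentation :: "nat \<Rightarrow> (nat \<Rightarrow> int) \<Rightarrow> (nat \<Rightarrow> fa) \<Rightarrow> (nat \<Rightarrow> bit) \<Rightarrow> bool" where
  "augmentation n deg D \<epsilon> \<longleftrightarrow> (\<forall>i<n. deg i \<noteq> 0 \<longrightarrow> \<epsilon> i = 0) \<and>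
     (\<forall>a. is_elem n a \<longrightarrow> aug_eval \<epsilon> (deriv D a) = 0)"

definition const_fa :: "bit \<Rightarrow> fa" where
  "const_fa c = (\<lambda>u. if u = [] then c else 0)"

definition phi_eps :: "(nat \<Rightarrow> bit) \<Rightarrow> fa \<Rightarrow> fa" where
  "phi_eps \<epsilon> = alg (\<lambda>j. mon [j] + const_fa (\<epsilon> j))"

definition phi_eps_inv :: "(nat \<Rightarrow> bit) \<Rightarrow> fa \<Rightarrow> fa" where
  "phi_eps_inv \<epsilon> = alg (\<lambda>j. mon [j] - const_fa (\<epsilon> j))"

text \<open>Coefficient of q_j in the length-one part of phi \<partial> phi^-1 (q_i).\<close>
definition lin_diff_gen :: "(nat \<Rightarrow> fa) \<Rightarrow> (nat \<Rightarrow> bit) \<Rightarrow> nat \<Rightarrow> nat \<Rightarrow> bit" where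
  "lin_diff_gen D \<epsilon> i j = phi_eps \<epsilon> (deriv D (phi_eps_inv \<epsilon> (mon [i]))) [j]"

text \<open>The vector space A spanned by the generators: coefficient functions nat => bit.\<close>
definition lin_diff :: "nat \<Rightarrow> (nat \<Rightarrow> fa) \<Rightarrow> (nat \<Rightarrow> bit) \<Rightarrow> (nat \<Rightarrow> bit) \<Rightarrow> (nat \<Rightarrow> bit)" where
  "lin_diff n D \<epsilon> v = (\<lambda>j. \<Sum>i<n. v i * lin_diff_gen D \<epsilon> i j)"

text \<open>A^t: span of generators of height at most t.\<close>
definition filt_sub :: "nat \<Rightarrow> (nat \<Rightarrow> real) \<Rightarrow> real \<Rightarrow> (nat \<Rightarrow> bit) set" where
  "filt_sub n h t = {v. \<forall>i. v i \<noteq> 0 \<longrightarrow> i < n \<and> h i \<le> t}"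

definition interleaved_2delta ::
  "(real \<Rightarrow> 'a::ab_group_add set) \<Rightarrow> ('a \<Rightarrow> 'a) \<Rightarrow> (real \<Rightarrow> 'b::ab_group_add set) \<Rightarrow> ('b \<Rightarrow> 'b)
    \<Rightarrow> real \<Rightarrow> (real \<Rightarrow> 'a \<Rightarrow> 'b) \<Rightarrow> (real \<Rightarrow> 'b \<Rightarrow> 'a) \<Rightarrow> bool" where
  "interleaved_2delta U dU V dV \<delta> \<phi> \<psi> \<longleftrightarrow>
     (\<forall>t. \<forall>x\<in>U t. \<phi> t x \<in> V (t + \<delta>)) \<and>
     (\<forall>t. \<forall>y\<in>V t. \<psi> t y \<in> U (t + \<delta>)) \<and>
     (\<forall>t. \<forall>x\<in>U t. \<forall>x'\<in>U t. \<phi> t (x + x') = \<phi> t x + \<phi> t x') \<and>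
     (\<forall>t. \<forall>y\<in>V t. \<forall>y'\<in>V t. \<psi> t (y + y') = \<psi> t y + \<psi> t y') \<and>
     (\<forall>t. \<forall>x\<in>U t. \<phi> t (dU x) = dV (\<phi> t x)) \<and>
     (\<forall>t. \<forall>y\<in>V t. \<psi> t (dV y) = dU (\<psi> t y)) \<and>
     (\<forall>s t. s \<le> t \<longrightarrow> (\<forall>x\<in>U s. \<phi> t x = \<phi> s x)) \<and>
     (\<forall>s t. s \<le> t \<longrightarrow> (\<forall>y\<in>V s. \<psi> t y = \<psi> s y)) \<and>
     (\<forall>t. \<forall>x\<in>U t. \<psi> (t + \<delta>) (\<phi> t x) = x) \<and>
     (\<forall>t. \<forall>y\<in>V t. \<phi> (t + \<delta>) (\<psi> t y) = y)"

text \<open>Both algebras are represented on the same index set; sigma sends q_i to q_i'.\<close>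
definition sigma_gen :: "nat \<Rightarrow> fa" where
  "sigma_gen i = mon [i]"

definition sigma :: "fa \<Rightarrow> fa" where
  "sigma = alg sigma_gen"

text \<open>Induced map on the spans of generators (coordinates w.r.t. q_i go to
  coordinates w.r.t. q_i'), and its inverse.\<close>
definition sigma_lin :: "(nat \<Rightarrow> bit) \<Rightarrow> (nat \<Rightarrow> bit)" where
  "sigma_lin v = v"

definition sigma_lin_inv :: "(nat \<Rightarrow> bit) \<Rightarrow> (nat \<Rightarrow> bit)" where
  "sigma_lin_inv v = v"

end

theory Submission
  imports Defs
begin

text \<open>Since both algebras are presented on the same generators, \<open>\<sigma>\<close> acts as the identity on
  elements, so the chain-map property of \<open>\<sigma>\<close> forces \<open>\<partial>'\<close> and \<open>\<partial>\<close> to agree on every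
  element, in particular on the \<open>\<phi>\<^sup>-\<^sup>1\<close>-images of generators; hence the two linearized
  differentials coincide. The heights of corresponding generators differ by at most \<open>\<delta>\<close>,
  so each filtration level \<open>A\<^sup>t\<close> lies in the other filtration's level \<open>t + \<delta>\<close>, and the
  identity maps form the interleaving. Neither the DGA axioms nor the augmentation
  property enter the argument.\<close>

lemma fmul_mon_Nil_right: "fmul a (mon []) = a"
proof
  fix w
  have "fmul a (mon []) w = (\<Sum>k\<le>length w. if k = length w then a w else 0)"
    unfolding fmul_def mon_def by (intro sum.cong) auto
  then show "fmul a (mon []) w = a w" by simp
qed

lemma fmul_mon_singleton_Nil: "fmul (mon [x]) b [] = 0"
  by (simp add: fmul_def mon_def)

lemma fmul_mon_singleton_Cons: "fmul (mon [x]) b (y # u) = (if y = x then b u else 0)"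
proof -
  have "fmul (mon [x]) b (y # u) = (\<Sum>k\<le>length u. mon [x] (y # take k u) * b (drop k u))"
    unfolding fmul_def
    by (simp only: length_Cons sum.atMost_Suc_shift take_Suc_Cons drop_Suc_Cons)
      (simp add: mon_def)
  also have "\<dots> = (\<Sum>k\<le>length u. if k = 0 then (if y = x then b u else 0) else 0)"
    by (intro sum.cong) (auto simp: mon_def)
  finally show ?thesis by simp
qed

lemma fmul_mon_singleton_mon: "fmul (mon [x]) (mon w) = mon (x # w)"
proof
  fix u
  show "fmul (mon [x]) (mon w) u = mon (x # w) u"
    by (cases u) (simp_all only: fmul_mon_singleton_Nil fmul_mon_singleton_Cons, simp_all add: mon_def)
qed

lemma alg_word_mon: "alg_word (\<lambda>i. mon [i]) w = mon w"
  by (induction w) (simp_all add: alg_word_def fmul_mon_singleton_mon)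

lemma supp_mon: "supp (mon w) = {w}"
  by (auto simp: supp_def mon_def)

lemma supp_zero: "supp 0 = {}"
  by (simp add: supp_def)

lemma lin_ext_mon: "lin_ext f (mon w) = f w"
proof
  fix u
  have "lin_ext f (mon w) u = mon w w * f w u"
    unfolding lin_ext_def supp_mon by simp
  then show "lin_ext f (mon w) u = f w u"
    by (simp add: mon_def)
qed

lemma lin_ext_mon_expansion:
  assumes "finite (supp a)"
  shows "lin_ext mon a = a"
proof
  fix u
  have "lin_ext mon a u = (\<Sum>w\<in>supp a. if w = u then a w else 0)"
    unfolding lin_ext_def mon_def by (intro sum.cong) auto
  also have "\<dots> = a u"
    using assms by (simp add: supp_def)
  finally show "lin_ext mon a u = a u" .
qed

text \<open>Without the finite-support hypothesis \<open>lin_ext\<close> sums over an infinite set and returns \<open>0\<close>.\<close>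
lemma sigma_eq: "sigma a = (if finite (supp a) then a else 0)"
  unfolding sigma_def alg_def sigma_gen_def alg_word_mon
  by (simp add: lin_ext_mon_expansion) (simp add: lin_ext_def fun_eq_iff)

lemma lin_ext_sigma: "lin_ext f (sigma b) = lin_ext f b"
  by (simp add: sigma_eq) (simp add: lin_ext_def supp_zero)

lemma phi_eps_inv_generator: "phi_eps_inv \<epsilon> (mon [i]) = mon [i] - const_fa (\<epsilon> i)"
  unfolding phi_eps_inv_def alg_def lin_ext_mon alg_word_def
  by (simp only: foldr.simps o_def id_def fmul_mon_Nil_right)

lemma is_elem_phi_eps_inv_generator:
  assumes "i < n"
  shows "is_elem n (phi_eps_inv \<epsilon> (mon [i]))"
proof -
  have "supp (phi_eps_inv \<epsilon> (mon [i])) \<subseteq> {[i], []}"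
    unfolding phi_eps_inv_generator by (auto simp: supp_def mon_def const_fa_def)
  then show ?thesis
    using assms by (auto simp: is_elem_def intro: finite_subset)
qed

lemma lin_diff_eq_if_sigma_chain_map:
  assumes "\<forall>a. is_elem n a \<longrightarrow> deriv D' (sigma a) = sigma (deriv D a)"
  shows "lin_diff n D' \<epsilon> = lin_diff n D \<epsilon>"
proof -
  have "lin_diff_gen D' \<epsilon> i = lin_diff_gen D \<epsilon> i" if "i < n" for i
  proof -
    let ?p = "phi_eps_inv \<epsilon> (mon [i])"
    have elem: "is_elem n ?p"
      using that by (rule is_elem_phi_eps_inv_generator)
    then have "sigma ?p = ?p"
      by (simp add: is_elem_def sigma_eq)
    then have "deriv D' ?p = sigma (deriv D ?p)"
      using assms elem by metis
    then show ?thesis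
      unfolding lin_diff_gen_def phi_eps_def alg_def by (simp only: lin_ext_sigma)
  qed
  then show ?thesis
    by (simp add: lin_diff_def fun_eq_iff)
qed

lemma filt_sub_shift:
  assumes "\<forall>i<n. h' i \<le> h i + \<delta>"
  shows "filt_sub n h t \<subseteq> filt_sub n h' (t + \<delta>)"
  using assms by (fastforce simp: filt_sub_def)

lemma interleaved_2delta_id:
  assumes "\<And>t. U t \<subseteq> V (t + \<delta>)" and "\<And>t. V t \<subseteq> U (t + \<delta>)"
  shows "interleaved_2delta U d V d \<delta> (\<lambda>t. id) (\<lambda>t. id)"
  using assms by (auto simp: interleaved_2delta_def)

theorem lemma4p3:
  fixes n :: nat and deg deg' :: "nat \<Rightarrow> int" and D D' :: "nat \<Rightarrow> fa"
    and h h' :: "nat \<Rightarrow> real" and \<epsilon> :: "nat \<Rightarrow> bit" and \<delta> :: real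
  assumes A: "filtered_CE_DGA n deg D h"
    and A': "filtered_CE_DGA n deg' D' h'"
    and sigma_deg: "\<forall>i<n. deg' i = deg i"
    and sigma_chain: "\<forall>a. is_elem n a \<longrightarrow> deriv D' (sigma a) = sigma (deriv D a)"
    and aug: "augmentation n deg D \<epsilon>"
    and delta: "\<forall>i<n. \<bar>h' i - h i\<bar> \<le> \<delta>"
  shows "interleaved_2delta (filt_sub n h) (lin_diff n D \<epsilon>)
                            (filt_sub n h') (lin_diff n D' \<epsilon>)
                            \<delta> (\<lambda>t. sigma_lin) (\<lambda>t. sigma_lin_inv)"
proof -
  have "sigma_lin = id" "sigma_lin_inv = id"
    by (simp_all add: fun_eq_iff sigma_lin_def sigma_lin_inv_def)
  moreover have "lin_diff n D' \<epsilon> = lin_diff n D \<epsilon>"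
    using sigma_chain by (rule lin_diff_eq_if_sigma_chain_map)
  moreover have "\<forall>i<n. h' i \<le> h i + \<delta>" "\<forall>i<n. h i \<le> h' i + \<delta>"
    using delta by (simp_all add: abs_le_iff add.commute diff_le_eq)
  ultimately show ?thesis
    by (simp add: interleaved_2delta_id filt_sub_shift)
qed

end
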